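(* For every $m\in\mathbb{N}$ and every composition $\alpha\in\mathcal{C}_m$ of length $N$, $$W_\alpha=\frac1{2N}\bigoplus_{i=1}^N\big(\mathrm{U}_{\alpha_i}-\mathrm{U}_{\alpha_i}^\top\big)+\frac1{2N^2}\mathbbm{1}_{m\times m}.$$
   Context: $\mathcal{C}_m$ is the set of compositions of $m$: tuples $\alpha=(\alpha_1,\dots,\alpha_N)$ of positive integers with $\alpha_1+\dots+\alpha_N=m$. Let $E^j:[0,1]\to\mathbb{R}^m$, $t\mapsto te_j$. Path concatenation: $(X\star Y)(t)=X(2t)$ for $t\in[0,\frac12)$ and $X(1)+Y(2t-1)$ for $t\in[\frac12,1]$. The $i$-th axis subpath is $\mathsf{Ax}^{\alpha,i}=E^{\alpha_1+\dots+\alpha_{i-1}+1}\star\dots\star E^{\alpha_1+\dots+\alpha_i}$. For a path $X:[0,1]\to\mathbb{R}^m$, its $2$-truncated signature is $\sigma(X)=1\oplus(X(1)-X(0))\oplus\big(\int_{0<t_1<t_2<1}\dot X_{a}(t_1)\dot X_{b}(t_2)\,dt_1dt_2\big)_{a,b}\in\mathcal{G}_{m,2}$, where $\mathcal{G}_{m,2}=\exp(\mathfrak{g}_{m,2})$ is the free nilpotent Lie group of step $2$ inside $T_{m,2}=\mathbb{R}\oplus\mathbb{R}^m\oplus\mathbb{R}^{m\times m}$ (truncated tensor product; $\mathfrak{g}_{m,2}$ the Lie subalgebra generated by $e_1,\dots,e_m$; $\exp(\mathbf{z})=1+\mathbf{z}+\mathbf{z}^{\otimes2}/2$; $\log=\exp^{-1}$).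 For $\mathbf{x}\in\mathcal{G}_{m,2}^N$, $\mathsf{bary}(\mathbf{x})$ is the unique $\mathbf{m}\in\mathcal{G}_{m,2}$ with $\sum_i\log(\mathbf{m}^{-1}\mathbf{x}_i)=0$, and $\mathsf{bary}^{(2)}$ its matrix (level-2) component. Define $W_\alpha=\mathsf{bary}^{(2)}(\sigma(\mathsf{Ax}^{\alpha,1}),\dots,\sigma(\mathsf{Ax}^{\alpha,N}))\in\mathbb{R}^{m\times m}$. $\mathrm{U}_n$ is the strictly upper triangular $n\times n$ matrix with all entries above the diagonal equal to $1$, $\bigoplus$ denotes block diagonal sum, and $\mathbbm{1}_{m\times m}$ is the all-ones matrix. *)

theory Defs
  imports "HOL-Analysis.Analysis"
begin

text \<open>Conventions: vectors in R^m are functions nat => real, coordinates indexed 0..m-1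
 (so the paper's e_j is our unit j-1); m x m matrices are nat => nat => real, indices 0..m-1.
 Elements of the truncated tensor algebra T_{m,2} = R + R^m + R^{m x m} are triples.\<close>

type_synonym tens = "real \<times> (nat \<Rightarrow> real) \<times> (nat \<Rightarrow> nat \<Rightarrow> real)"

definition unitv :: "nat \<Rightarrow> nat \<Rightarrow> real" where
  "unitv j = (\<lambda>k. if k = j then 1 else 0)"

definition tone :: tens where "tone = (1, (\<lambda>_. 0), (\<lambda>_ _. 0))"
definition tzero :: tens where "tzero = (0, (\<lambda>_. 0), (\<lambda>_ _. 0))"

definition tadd :: "tens \<Rightarrow> tens \<Rightarrow> tens" where
  "tadd x y = (case x of (a, v, M) \<Rightarrow> case y of (b, w, P) \<Rightarrow>
     (a + b, (\<lambda>k. v k + w k), (\<lambda>k l. M k l + P k l)))"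

definition tscale :: "real \<Rightarrow> tens \<Rightarrow> tens" where
  "tscale c x = (case x of (a, v, M) \<Rightarrow> (c * a, (\<lambda>k. c * v k), (\<lambda>k l. c * M k l)))"

definition tmul :: "tens \<Rightarrow> tens \<Rightarrow> tens" where
  "tmul x y = (case x of (a, v, M) \<Rightarrow> case y of (b, w, P) \<Rightarrow>
     (a * b, (\<lambda>k. a * w k + b * v k), (\<lambda>k l. a * P k l + b * M k l + v k * w l)))"

definition tsum_list :: "tens list \<Rightarrow> tens" where
  "tsum_list xs = foldr tadd xs tzero"

definition tbracket :: "tens \<Rightarrow> tens \<Rightarrow> tens" where
  "tbracket x y = tadd (tmul x y) (tscale (-1) (tmul y x))"

inductive_set lie_gen :: "nat \<Rightarrow> tens set" for m :: nat where
  gen: "j < m \<Longrightarrow> (0, unitv j, (\<lambda>_ _. 0)) \<in> lie_gen m"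
| add: "x \<in> lie_gen m \<Longrightarrow> y \<in> lie_gen m \<Longrightarrow> tadd x y \<in> lie_gen m"
| scale: "x \<in> lie_gen m \<Longrightarrow> tscale c x \<in> lie_gen m"
| brk: "x \<in> lie_gen m \<Longrightarrow> y \<in> lie_gen m \<Longrightarrow> tbracket x y \<in> lie_gen m"

definition texp :: "tens \<Rightarrow> tens" where
  "texp z = tadd tone (tadd z (tscale (1/2) (tmul z z)))"

definition Gm2 :: "nat \<Rightarrow> tens set" where
  "Gm2 m = texp ` lie_gen m"

definition tlog :: "nat \<Rightarrow> tens \<Rightarrow> tens" where
  "tlog m x = (THE z. z \<in> lie_gen m \<and> texp z = x)"

definition tinv :: "tens \<Rightarrow> tens" where
  "tinv x = (THE y. tmul y x = tone \<and> tmul x y = tone)"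

definition bary :: "nat \<Rightarrow> tens list \<Rightarrow> tens" where
  "bary m xs = (THE \<mu>. \<mu> \<in> Gm2 m \<and>
      tsum_list (map (\<lambda>x. tlog m (tmul (tinv \<mu>) x)) xs) = tzero)"

definition bary2 :: "nat \<Rightarrow> tens list \<Rightarrow> nat \<Rightarrow> nat \<Rightarrow> real" where
  "bary2 m xs = snd (snd (bary m xs))"

type_synonym path = "real \<Rightarrow> nat \<Rightarrow> real"

definition sig2 :: "path \<Rightarrow> nat \<Rightarrow> nat \<Rightarrow> real" where
  "sig2 X a b = integral {p :: real \<times> real. 0 < fst p \<and> fst p < snd p \<and> snd p < 1}
      (\<lambda>p. deriv (\<lambda>s. X s a) (fst p) * deriv (\<lambda>s. X s b) (snd p))"

definition sig :: "path \<Rightarrow> tens" where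
  "sig X = (1, (\<lambda>a. X 1 a - X 0 a), sig2 X)"

definition Epath :: "nat \<Rightarrow> path" where
  "Epath j = (\<lambda>t k. t * unitv j k)"

definition pcat :: "path \<Rightarrow> path \<Rightarrow> path" where
  "pcat X Y = (\<lambda>t. if t < 1/2 then X (2 * t) else (\<lambda>k. X 1 k + Y (2 * t - 1) k))"

fun pchain :: "nat list \<Rightarrow> path" where
  "pchain [] = (\<lambda>t k. 0)"
| "pchain [j] = Epath j"
| "pchain (j # js) = pcat (Epath j) (pchain js)"

definition pref :: "nat list \<Rightarrow> nat \<Rightarrow> nat" where
  "pref \<alpha> i = sum_list (take i \<alpha>)"

text \<open>i-th axis subpath (i 0-based): E^{pref i + 1} * ... * E^{pref (i+1)} in 1-based terms.\<close>
definition Ax :: "nat list \<Rightarrow> nat \<Rightarrow> path" where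
  "Ax \<alpha> i = pchain [pref \<alpha> i ..< pref \<alpha> (Suc i)]"

definition W :: "nat list \<Rightarrow> nat \<Rightarrow> nat \<Rightarrow> real" where
  "W \<alpha> = bary2 (sum_list \<alpha>) (map (\<lambda>i. sig (Ax \<alpha> i)) [0..<length \<alpha>])"

definition Umat :: "nat \<Rightarrow> nat \<Rightarrow> nat \<Rightarrow> real" where
  "Umat n i j = (if i < n \<and> j < n \<and> i < j then 1 else 0)"

definition transp :: "(nat \<Rightarrow> nat \<Rightarrow> real) \<Rightarrow> nat \<Rightarrow> nat \<Rightarrow> real" where
  "transp A i j = A j i"

definition bdsum :: "nat list \<Rightarrow> (nat \<Rightarrow> nat \<Rightarrow> nat \<Rightarrow> real) \<Rightarrow> nat \<Rightarrow> nat \<Rightarrow> real" where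
  "bdsum ns B a b = (if \<exists>i<length ns. pref ns i \<le> a \<and> a < pref ns (Suc i) \<and> pref ns i \<le> b \<and> b < pref ns (Suc i)
     then (let i = (THE i. i < length ns \<and> pref ns i \<le> a \<and> a < pref ns (Suc i))
           in B i (a - pref ns i) (b - pref ns i)) else 0)"

definition is_composition :: "nat \<Rightarrow> nat list \<Rightarrow> bool" where
  "is_composition m \<alpha> \<longleftrightarrow> (\<forall>i<length \<alpha>. 0 < \<alpha> ! i) \<and> sum_list \<alpha> = m"

end

theory Submission
  imports Defs
begin

text \<open>
  In exponential coordinates an element of G_{m,2} is exp (v, A) with v a vector and A a skew
  matrix, and the step-2 Baker--Campbell--Hausdorff formula reads
  exp (v, A) * exp (w, B) = exp (v + w, A + B + (v w^T - w v^T) / 2).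
  Hence for mu = exp (u, B) and x_i = exp (v_i, A_i) the sum of the logarithms of mu^-1 x_i is
  (sum v_i - N u, sum A_i - N B + ((sum v_i) u^T - u (sum v_i)^T) / 2), which vanishes exactly
  when (u, B) is the arithmetic mean of the (v_i, A_i): the barycentre is the exponential of the
  mean.

  Each coordinate of the i-th axis path is a ramp on its own time interval, so its level-two
  signature is 1 above, 1/2 on and 0 below the diagonal of the i-th block, and its logarithm is
  (v_i, A_i) with v_i the indicator of the block and A_i = sgn (l - k) / 2 on the block.
  As the blocks partition {0..<m}, the mean of the v_i is the constant vector 1/N, so the
  level-two part of the exponential of the mean is (1/N) sum A_i plus 1/(2 N^2) in every entry.
\<close>

section \<open>Exponential coordinates on the free step-2 nilpotent group\<close>

lemma tadd_Pair [simp]: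
  "tadd (a, v, A) (b, w, B) = (a + b, \<lambda>k. v k + w k, \<lambda>k l. A k l + B k l)"
  by (simp add: tadd_def)

lemma tscale_Pair [simp]: "tscale c (a, v, A) = (c * a, \<lambda>k. c * v k, \<lambda>k l. c * A k l)"
  by (simp add: tscale_def)

lemma tmul_Pair [simp]:
  "tmul (a, v, A) (b, w, B) =
     (a * b, \<lambda>k. a * w k + b * v k, \<lambda>k l. a * B k l + b * A k l + v k * w l)"
  by (simp add: tmul_def)

lemma texp_Pair: "texp (0, v, A) = (1, v, \<lambda>k l. A k l + v k * v l / 2)"
  by (simp add: texp_def tone_def)

definition lie_coords :: "nat \<Rightarrow> (nat \<Rightarrow> real) \<Rightarrow> (nat \<Rightarrow> nat \<Rightarrow> real) \<Rightarrow> bool" where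
  "lie_coords m v A \<longleftrightarrow>
     (\<forall>k\<ge>m. v k = 0) \<and> (\<forall>k l. A k l + A l k = 0) \<and> (\<forall>k\<ge>m. \<forall>l. A k l = 0)"

lemma lie_gen_imp_lie_coords:
  assumes "x \<in> lie_gen m"
  obtains v A where "x = (0, v, A)" and "lie_coords m v A"
proof -
  have "\<exists>v A. x = (0, v, A) \<and> lie_coords m v A"
    using assms
  proof (induction rule: lie_gen.induct)
    case (gen j)
    then show ?case by (auto simp: lie_coords_def unitv_def)
  next
    case (add x y)
    then obtain v A w B where "x = (0, v, A)" "lie_coords m v A" "y = (0, w, B)" "lie_coords m w B"
      by blast
    then show ?case by (simp add: lie_coords_def algebra_simps)
  next
    case (scale x c)
    then obtain v A where "x = (0, v, A)" "lie_coords m v A"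
      by blast
    then show ?case by (simp add: lie_coords_def flip: distrib_left)
  next
    case (brk x y)
    then obtain v A w B where "x = (0, v, A)" "lie_coords m v A" "y = (0, w, B)" "lie_coords m w B"
      by blast
    then show ?case by (simp add: lie_coords_def tbracket_def algebra_simps)
  qed
  then show ?thesis using that by blast
qed

lemma lie_gen_sum:
  fixes n :: nat
  assumes "0 < m" and "\<And>i. i < n \<Longrightarrow> (0, V i, M i) \<in> lie_gen m"
  shows "(0, \<lambda>k. \<Sum>i<n. V i k, \<lambda>k l. \<Sum>i<n. M i k l) \<in> lie_gen m"
  using assms(2)
proof (induction n)
  case 0
  show ?case using lie_gen.scale[OF lie_gen.gen[OF assms(1)], of 0] by simp
next
  case (Suc n)
  have "tadd (0, \<lambda>k. \<Sum>i<n. V i k, \<lambda>k l. \<Sum>i<n. M i k l) (0, V n, M n) \<in> lie_gen m"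
    using Suc by (intro lie_gen.add) simp_all
  then show ?case by simp
qed

lemma lie_gen_unitv:
  "k < m \<Longrightarrow> (0, \<lambda>i. c * unitv k i, \<lambda>_ _. 0) \<in> lie_gen m"
  using lie_gen.scale[OF lie_gen.gen, of k m c] by simp

lemma lie_gen_unitv_bracket:
  "k < m \<Longrightarrow> l < m \<Longrightarrow>
    (0, \<lambda>_. 0, \<lambda>i j. c * (unitv k i * unitv l j - unitv l i * unitv k j)) \<in> lie_gen m"
  using lie_gen.scale[OF lie_gen.brk[OF lie_gen.gen lie_gen.gen], of k m l c]
  by (simp add: tbracket_def algebra_simps)

lemma mult_unitv: "c * unitv k i = (if k = i then c else 0)"
  by (simp add: unitv_def)

lemma sum_unitv_expansion:
  "(\<forall>k\<ge>m. v k = 0) \<Longrightarrow> (\<lambda>i. \<Sum>k<m. v k * unitv k i) = v"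
  by (auto simp: mult_unitv)

lemma sum_sum_unitv:
  fixes f :: "nat \<Rightarrow> nat \<Rightarrow> real"
  shows "(\<Sum>k<m. \<Sum>l<m. f k l * (unitv k i * unitv l j)) = (if i < m \<and> j < m then f i j else 0)"
  unfolding mult.assoc[symmetric] by (cases "j < m") (simp_all add: mult_unitv)

lemma skew_unitv_expansion:
  assumes "\<And>k l. A k l + A l k = 0" and "\<And>k l. m \<le> k \<Longrightarrow> A k l = 0"
  shows "(\<Sum>k<m. \<Sum>l<m. A k l / 2 * (unitv k i * unitv l j - unitv l i * unitv k j)) = A i j"
proof -
  have "(\<Sum>k<m. \<Sum>l<m. A k l / 2 * (unitv k i * unitv l j - unitv l i * unitv k j)) =
        (\<Sum>k<m. \<Sum>l<m. A k l / 2 * (unitv k i * unitv l j))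
      - (\<Sum>k<m. \<Sum>l<m. A k l / 2 * (unitv l i * unitv k j))"
    by (simp add: right_diff_distrib sum_subtractf)
  also have "(\<Sum>k<m. \<Sum>l<m. A k l / 2 * (unitv l i * unitv k j)) =
      (\<Sum>l<m. \<Sum>k<m. A k l / 2 * (unitv l i * unitv k j))"
    by (rule sum.swap)
  also have "(\<Sum>k<m. \<Sum>l<m. A k l / 2 * (unitv k i * unitv l j)) -
      (\<Sum>l<m. \<Sum>k<m. A k l / 2 * (unitv l i * unitv k j)) =
      (if i < m \<and> j < m then A i j / 2 - A j i / 2 else 0)"
    by (simp only: sum_sum_unitv[of "\<lambda>k l. A k l / 2"] sum_sum_unitv[of "\<lambda>l k. A k l / 2"]) simp
  also have "\<dots> = A i j"
    using assms(1)[of i j] assms(2)[of i j] assms(2)[of j i] by auto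
  finally show ?thesis .
qed

lemma lie_coords_imp_lie_gen:
  assumes m: "0 < m" and "lie_coords m v A"
  shows "(0, v, A) \<in> lie_gen m"
proof -
  have v: "\<forall>k\<ge>m. v k = 0" and skew: "\<And>k l. A k l + A l k = 0"
    and A: "\<And>k l. m \<le> k \<Longrightarrow> A k l = 0"
    using assms(2) by (auto simp: lie_coords_def)
  have "(0, \<lambda>i. \<Sum>k<m. v k * unitv k i, \<lambda>i j. \<Sum>k<m. 0) \<in> lie_gen m"
    by (rule lie_gen_sum[OF m]) (simp add: lie_gen_unitv)
  then have v_in: "(0, v, \<lambda>_ _. 0) \<in> lie_gen m"
    unfolding sum_unitv_expansion[OF v] by simp
  have "(0, \<lambda>i. \<Sum>k<m. 0,
      \<lambda>i j. \<Sum>k<m. \<Sum>l<m. A k l / 2 * (unitv k i * unitv l j - unitv l i * unitv k j)) \<in> lie_gen m"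
  proof (rule lie_gen_sum[OF m])
    fix k assume k: "k < m"
    have "(0, \<lambda>i. 0, \<lambda>i j. A k l / 2 * (unitv k i * unitv l j - unitv l i * unitv k j)) \<in> lie_gen m"
      if "l < m" for l
      using lie_gen_unitv_bracket[OF k that] .
    then show "(0, \<lambda>i. 0, \<lambda>i j. \<Sum>l<m. A k l / 2 * (unitv k i * unitv l j - unitv l i * unitv k j))
        \<in> lie_gen m"
      using lie_gen_sum[OF m, of m "\<lambda>l i. 0"
          "\<lambda>l i j. A k l / 2 * (unitv k i * unitv l j - unitv l i * unitv k j)"]
      by simp
  qed
  then have A_in: "(0, \<lambda>_. 0, A) \<in> lie_gen m"
    by (simp only: skew_unitv_expansion[OF skew A] sum.neutral_const)
  show ?thesis
    using lie_gen.add[OF v_in A_in] by simp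
qed

lemma lie_gen_iff: "0 < m \<Longrightarrow> (a, v, A) \<in> lie_gen m \<longleftrightarrow> a = 0 \<and> lie_coords m v A"
  by (metis lie_gen_imp_lie_coords lie_coords_imp_lie_gen prod.inject)

lemma tlog_texp:
  assumes "z \<in> lie_gen m"
  shows "tlog m (texp z) = z"
  unfolding tlog_def
proof (rule the_equality)
  show "z \<in> lie_gen m \<and> texp z = texp z" using assms by simp
next
  fix z' assume z': "z' \<in> lie_gen m \<and> texp z' = texp z"
  obtain v A where z: "z = (0, v, A)" using assms by (rule lie_gen_imp_lie_coords)
  obtain w B where "z' = (0, w, B)" using z' by (blast elim: lie_gen_imp_lie_coords)
  then show "z' = z" using z' unfolding z by (auto simp: texp_Pair fun_eq_iff)
qed

lemma tinv_texp: "tinv (texp (0, v, A)) = texp (0, \<lambda>k. - v k, \<lambda>k l. - A k l)"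
  unfolding tinv_def
proof (rule the_equality)
  show "tmul (texp (0, \<lambda>k. - v k, \<lambda>k l. - A k l)) (texp (0, v, A)) = tone \<and>
      tmul (texp (0, v, A)) (texp (0, \<lambda>k. - v k, \<lambda>k l. - A k l)) = tone"
    by (simp add: texp_Pair tone_def fun_eq_iff algebra_simps)
next
  fix y assume "tmul y (texp (0, v, A)) = tone \<and> tmul (texp (0, v, A)) y = tone"
  moreover obtain a w B where y: "y = (a, w, B)" by (cases y)
  ultimately have a: "a = 1" and "\<And>k. v k + w k = 0"
    and AB: "\<And>k l. A k l + v k * v l / 2 + B k l + w k * v l = 0"
    by (auto simp: texp_Pair tone_def fun_eq_iff)
  then have w: "w k = - v k" for k
    by (simp add: eq_neg_iff_add_eq_0 add.commute)
  have "B k l = - A k l + v k * v l / 2" for k l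
    using AB[of k l] unfolding w by (simp add: algebra_simps)
  then show "y = texp (0, \<lambda>k. - v k, \<lambda>k l. - A k l)"
    unfolding y texp_Pair a by (simp add: fun_eq_iff w)
qed

lemma tmul_texp:
  "tmul (texp (0, v, A)) (texp (0, w, B)) =
     texp (0, \<lambda>k. v k + w k, \<lambda>k l. A k l + B k l + (v k * w l - w k * v l) / 2)"
  by (simp add: texp_Pair fun_eq_iff field_simps)

lemma tlog_quotient:
  assumes "0 < m" and "(0, u, B) \<in> lie_gen m" and "(0, v, A) \<in> lie_gen m"
  shows "tlog m (tmul (tinv (texp (0, u, B))) (texp (0, v, A))) =
     (0, \<lambda>k. v k - u k, \<lambda>k l. A k l - B k l + (v k * u l - u k * v l) / 2)"
proof -
  have "tmul (tinv (texp (0, u, B))) (texp (0, v, A)) =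
      texp (0, \<lambda>k. v k - u k, \<lambda>k l. A k l - B k l + (v k * u l - u k * v l) / 2)"
    unfolding tinv_texp tmul_texp by (simp add: fun_eq_iff field_simps)
  moreover have "(0, \<lambda>k. v k - u k, \<lambda>k l. A k l - B k l + (v k * u l - u k * v l) / 2) \<in> lie_gen m"
  proof -
    have skew: "A k l + A l k = 0" "B k l + B l k = 0" for k l
      using assms by (auto simp: lie_gen_iff lie_coords_def)
    have "A k l - B k l + (v k * u l - u k * v l) / 2
        + (A l k - B l k + (v l * u k - u l * v k) / 2) = 0" for k l
      using skew[of k l] by (simp add: field_simps)
    then show ?thesis
      using assms by (simp add: lie_gen_iff lie_coords_def)
  qed
  ultimately show ?thesis by (simp add: tlog_texp)
qed

lemma tsum_list_map_upt:
  "tsum_list (map f [0..<N]) =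
     (\<Sum>i<N. fst (f i), \<lambda>k. \<Sum>i<N. fst (snd (f i)) k, \<lambda>k l. \<Sum>i<N. snd (snd (f i)) k l)"
proof -
  have "tsum_list (map f xs) = (\<Sum>i\<leftarrow>xs. fst (f i), \<lambda>k. \<Sum>i\<leftarrow>xs. fst (snd (f i)) k,
      \<lambda>k l. \<Sum>i\<leftarrow>xs. snd (snd (f i)) k l)" for xs
    by (induction xs) (auto simp: tsum_list_def tzero_def tadd_def split: prod.split)
  then show ?thesis
    by (simp add: sum_set_upt_conv_sum_list_nat[symmetric] atLeast0LessThan)
qed

definition tlog_quot_sum :: "nat \<Rightarrow> tens \<Rightarrow> tens list \<Rightarrow> tens" where
  "tlog_quot_sum m \<mu> xs = tsum_list (map (\<lambda>x. tlog m (tmul (tinv \<mu>) x)) xs)"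

lemma bary_eq_The: "bary m xs = (THE \<mu>. \<mu> \<in> Gm2 m \<and> tlog_quot_sum m \<mu> xs = tzero)"
  by (simp add: bary_def tlog_quot_sum_def)

lemma tlog_quot_sum_texp:
  assumes "0 < m" and "(0, u, B) \<in> lie_gen m" and "\<forall>i<N. (0, V i, M i) \<in> lie_gen m"
  shows "tlog_quot_sum m (texp (0, u, B)) (map (\<lambda>i. texp (0, V i, M i)) [0..<N]) =
    (0, \<lambda>k. (\<Sum>i<N. V i k) - N * u k,
        \<lambda>k l. (\<Sum>i<N. M i k l) - N * B k l + ((\<Sum>i<N. V i k) * u l - u k * (\<Sum>i<N. V i l)) / 2)"
proof -
  have "map (\<lambda>x. tlog m (tmul (tinv (texp (0, u, B))) x)) (map (\<lambda>i. texp (0, V i, M i)) [0..<N]) =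
      map (\<lambda>i. (0, \<lambda>k. V i k - u k, \<lambda>k l. M i k l - B k l + (V i k * u l - u k * V i l) / 2)) [0..<N]"
    using tlog_quotient[OF assms(1,2)] assms(3) by simp
  then show ?thesis
    by (simp add: tlog_quot_sum_def tsum_list_map_upt sum_subtractf sum.distrib
        sum_divide_distrib[symmetric] sum_distrib_left sum_distrib_right)
qed

lemma tlog_quot_sum_texp_eq_tzero_iff:
  assumes m: "0 < m" and N: "0 < N" and u_B: "(0, u, B) \<in> lie_gen m"
    and V_M: "\<forall>i<N. (0, V i, M i) \<in> lie_gen m"
  shows "tlog_quot_sum m (texp (0, u, B)) (map (\<lambda>i. texp (0, V i, M i)) [0..<N]) = tzero \<longleftrightarrow>
    u = (\<lambda>k. (\<Sum>i<N. V i k) / N) \<and> B = (\<lambda>k l. (\<Sum>i<N. M i k l) / N)"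
proof -
  have "tlog_quot_sum m (texp (0, u, B)) (map (\<lambda>i. texp (0, V i, M i)) [0..<N]) = tzero \<longleftrightarrow>
      (\<forall>k. (\<Sum>i<N. V i k) = N * u k) \<and>
      (\<forall>k l. (\<Sum>i<N. M i k l) - N * B k l + ((\<Sum>i<N. V i k) * u l - u k * (\<Sum>i<N. V i l)) / 2 = 0)"
    by (simp add: tlog_quot_sum_texp[OF m u_B V_M] tzero_def fun_eq_iff)
  also have "\<dots> \<longleftrightarrow> (\<forall>k. (\<Sum>i<N. V i k) = N * u k) \<and> (\<forall>k l. (\<Sum>i<N. M i k l) = N * B k l)"
    by (auto simp: algebra_simps)
  also have "\<dots> \<longleftrightarrow> u = (\<lambda>k. (\<Sum>i<N. V i k) / N) \<and> B = (\<lambda>k l. (\<Sum>i<N. M i k l) / N)"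
    using N by (auto simp: fun_eq_iff field_simps)
  finally show ?thesis .
qed

lemma bary_texp:
  assumes m: "0 < m" and N: "0 < N" and V_M: "\<forall>i<N. (0, V i, M i) \<in> lie_gen m"
  shows "bary m (map (\<lambda>i. texp (0, V i, M i)) [0..<N]) =
     texp (0, \<lambda>k. (\<Sum>i<N. V i k) / N, \<lambda>k l. (\<Sum>i<N. M i k l) / N)"
  unfolding bary_eq_The
proof (rule the_equality)
  let ?u = "\<lambda>k. (\<Sum>i<N. V i k) / N" and ?B = "\<lambda>k l. (\<Sum>i<N. M i k l) / N"
  have "lie_coords m (V i) (M i)" if "i < N" for i
    using V_M that by (simp add: lie_gen_iff[OF m])
  then have "lie_coords m ?u ?B"
    by (simp add: lie_coords_def sum.distrib[symmetric] add_divide_distrib[symmetric])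
  then have mean: "(0, ?u, ?B) \<in> lie_gen m"
    by (simp add: lie_gen_iff[OF m])
  then show "texp (0, ?u, ?B) \<in> Gm2 m \<and>
      tlog_quot_sum m (texp (0, ?u, ?B)) (map (\<lambda>i. texp (0, V i, M i)) [0..<N]) = tzero"
    by (simp add: Gm2_def tlog_quot_sum_texp_eq_tzero_iff[OF m N mean V_M])
next
  fix \<mu>
  assume \<mu>: "\<mu> \<in> Gm2 m \<and> tlog_quot_sum m \<mu> (map (\<lambda>i. texp (0, V i, M i)) [0..<N]) = tzero"
  then obtain u B where u_B: "(0, u, B) \<in> lie_gen m" and \<mu>_eq: "\<mu> = texp (0, u, B)"
    unfolding Gm2_def by (blast elim: lie_gen_imp_lie_coords)
  with \<mu> show "\<mu> = texp (0, \<lambda>k. (\<Sum>i<N. V i k) / N, \<lambda>k l. (\<Sum>i<N. M i k l) / N)"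
    by (simp add: tlog_quot_sum_texp_eq_tzero_iff[OF m N u_B V_M])
qed

section \<open>Signatures of axis paths\<close>

definition ramp :: "real \<Rightarrow> real \<Rightarrow> real \<Rightarrow> real" where
  "ramp l r s = (if s \<le> l then 0 else if r \<le> s then 1 else (s - l) / (r - l))"

lemma deriv_ramp:
  fixes f :: "real \<Rightarrow> real"
  assumes f: "\<And>s. 0 < s \<Longrightarrow> s < 1 \<Longrightarrow> f s = ramp l r s"
    and lr: "0 \<le> l" "l < r" "r \<le> 1" and s: "0 < s" "s < 1" "s \<noteq> l" "s \<noteq> r"
  shows "deriv f s = (if l < s \<and> s < r then 1 / (r - l) else 0)"
proof -
  consider "s < l" | "l < s" "s < r" | "r < s" using s by linarith
  then show ?thesis
  proof cases
    case 1
    have "(f has_field_derivative 0) (at s)"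
      by (rule has_field_derivative_transform_within_open[where f="\<lambda>_. 0" and S="{0<..<l}"])
         (use 1 s f lr in \<open>auto simp: ramp_def\<close>)
    then show ?thesis using 1 by (simp add: DERIV_imp_deriv)
  next
    case 2
    have "((\<lambda>x. (x - l) / (r - l)) has_field_derivative 1 / (r - l)) (at s)"
      using lr by (auto intro!: derivative_eq_intros)
    then have "(f has_field_derivative 1 / (r - l)) (at s)"
      by (rule has_field_derivative_transform_within_open[where S="{l<..<r}"])
         (use 2 s f lr in \<open>auto simp: ramp_def\<close>)
    then show ?thesis using 2 by (simp add: DERIV_imp_deriv)
  next
    case 3
    have "(f has_field_derivative 0) (at s)"
      by (rule has_field_derivative_transform_within_open[where f="\<lambda>_. 1" and S="{r<..<1}"])
         (use 3 s f lr in \<open>auto simp: ramp_def\<close>)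
    then show ?thesis using 3 by (simp add: DERIV_imp_deriv)
  qed
qed

lemma negligible_fst_eq: "negligible {p :: real \<times> real. fst p = c}"
proof -
  have "{p :: real \<times> real. fst p = c} = {x. x \<bullet> (1, 0) = c}" by (auto simp: inner_prod_def)
  then show ?thesis by (simp add: negligible_standard_hyperplane Basis_prod_def)
qed

lemma negligible_snd_eq: "negligible {p :: real \<times> real. snd p = c}"
proof -
  have "{p :: real \<times> real. snd p = c} = {x. x \<bullet> (0, 1) = c}" by (auto simp: inner_prod_def)
  then show ?thesis by (simp add: negligible_standard_hyperplane Basis_prod_def)
qed

definition simplex2 :: "(real \<times> real) set" where
  "simplex2 = {p. 0 < fst p \<and> fst p < snd p \<and> snd p < 1}"

lemma integral_simplex2_ramps:
  fixes f1 f2 :: "real \<Rightarrow> real"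
  assumes f1: "\<And>s. 0 < s \<Longrightarrow> s < 1 \<Longrightarrow> f1 s = ramp l1 r1 s"
    and f2: "\<And>s. 0 < s \<Longrightarrow> s < 1 \<Longrightarrow> f2 s = ramp l2 r2 s"
    and lr1: "0 \<le> l1" "l1 < r1" "r1 \<le> 1" and lr2: "0 \<le> l2" "l2 < r2" "r2 \<le> 1"
  shows "integral simplex2 (\<lambda>p. deriv f1 (fst p) * deriv f2 (snd p)) =
     integral (box (l1, l2) (r1, r2) \<inter> simplex2) (\<lambda>_. 1) / ((r1 - l1) * (r2 - l2))"
proof -
  let ?N = "{p :: real \<times> real. fst p = l1} \<union> {p. fst p = r1} \<union> {p. snd p = l2} \<union> {p. snd p = r2}"
  let ?c = "1 / ((r1 - l1) * (r2 - l2))"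
  have "negligible ?N" by (simp add: negligible_fst_eq negligible_snd_eq)
  then have "integral simplex2 (\<lambda>p. deriv f1 (fst p) * deriv f2 (snd p)) =
      integral simplex2 (\<lambda>p. ?c * (if p \<in> box (l1, l2) (r1, r2) then 1 else 0))"
  proof (rule integral_spike)
    fix p assume p: "p \<in> simplex2 - ?N"
    have "deriv f1 (fst p) = (if l1 < fst p \<and> fst p < r1 then 1 / (r1 - l1) else 0)"
      by (rule deriv_ramp[OF f1 lr1]) (use p in \<open>auto simp: simplex2_def\<close>)
    moreover have "deriv f2 (snd p) = (if l2 < snd p \<and> snd p < r2 then 1 / (r2 - l2) else 0)"
      by (rule deriv_ramp[OF f2 lr2]) (use p in \<open>auto simp: simplex2_def\<close>)
    ultimately show "?c * (if p \<in> box (l1, l2) (r1, r2) then 1 else 0) =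
        deriv f1 (fst p) * deriv f2 (snd p)"
      by (cases p) (auto simp: mem_box Basis_prod_def)
  qed
  also have "\<dots> = ?c * integral (box (l1, l2) (r1, r2) \<inter> simplex2) (\<lambda>_. 1)"
    by (simp add: integral_restrict_Int)
  finally show ?thesis by simp
qed

lemma has_integral_swap_cbox:
  fixes f :: "'a::euclidean_space \<times> 'b::euclidean_space \<Rightarrow> 'c::banach"
  assumes "(f has_integral i) (cbox (a, c) (b, d))"
  shows "((\<lambda>x. f (prod.swap x)) has_integral i) (cbox (c, a) (d, b))"
proof -
  have "((\<lambda>x. f (prod.swap x)) has_integral (1 / 1) *\<^sub>R i) (prod.swap ` cbox (a, c) (b, d))"
  proof (rule has_integral_twiddle[OF _ _ _ _ _ _ _ assms])
    show "measure lborel (prod.swap ` cbox u v) = 1 * measure lborel (cbox u v)" for u v :: "'b \<times> 'a"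
      by (metis content_Pair mult.commute old.prod.exhaust swap_cbox_Pair mult_1)
  qed (use isCont_swap in \<open>fastforce+\<close>)
  then show ?thesis by simp
qed

lemma integral_triangle:
  fixes l r :: real
  assumes "l < r"
  shows "integral {p. l < fst p \<and> fst p < snd p \<and> snd p < r} (\<lambda>_. 1::real) = (r - l)\<^sup>2 / 2"
proof -
  define T where "T = {p::real \<times> real. l < fst p \<and> fst p < snd p \<and> snd p < r}"
  define C where "C = cbox (l, l) (r, r)"
  define I where "I = integral T (\<lambda>_. 1::real)"
  have "T \<subseteq> C" by (auto simp: T_def C_def mem_box Basis_prod_def)
  have "open T" unfolding T_def
    by (intro open_Collect_conj open_Collect_less continuous_intros)
  moreover have "bounded T"
    using \<open>T \<subseteq> C\<close> unfolding C_def by (meson bounded_cbox bounded_subset)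
  ultimately have "(\<lambda>_. 1::real) integrable_on T"
    using lmeasurable_iff_integrable_on lmeasurable_open by blast
  then have below: "((\<lambda>x. if x \<in> T then 1 else 0::real) has_integral I) C"
    using \<open>T \<subseteq> C\<close> by (simp add: I_def integrable_integral has_integral_restrict_Int Int_absorb2)
  then have above: "((\<lambda>x. if prod.swap x \<in> T then 1 else 0::real) has_integral I) C"
    unfolding C_def by (rule has_integral_swap_cbox)
  have neg: "negligible ((C - box (l, l) (r, r)) \<union> {x. (1, -1) \<bullet> x = (0::real)})"
    unfolding C_def
    by (intro negligible_Un negligible_frontier_interval negligible_hyperplane) (simp add: zero_prod_def)
  have "((\<lambda>_. 1::real) has_integral I + I) C"
  proof (rule has_integral_spike[OF neg _ has_integral_add[OF below above]])
    fix x assume x: "x \<in> C - ((C - box (l, l) (r, r)) \<union> {x. (1, -1) \<bullet> x = (0::real)})"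
    obtain a b where ab: "x = (a, b)" by (cases x)
    have "l < a" "a < r" "l < b" "b < r" "a \<noteq> b"
      using x unfolding ab by (auto simp: mem_box Basis_prod_def inner_prod_def)
    then consider "l < a \<and> a < b \<and> b < r" | "l < b \<and> b < a \<and> a < r" by linarith
    then show "(1::real) = (if x \<in> T then 1 else 0) + (if prod.swap x \<in> T then 1 else 0)"
      by cases (auto simp: T_def ab)
  qed
  moreover have "((\<lambda>_. 1::real) has_integral (r - l)\<^sup>2) C"
    using has_integral_const[of "1::real" "(l, l)" "(r, r)"] assms
    by (simp add: C_def content_Pair power2_eq_square)
  ultimately have "I + I = (r - l)\<^sup>2"
    by (rule has_integral_unique)
  then show ?thesis
    unfolding I_def T_def by simp
qed

lemma box_Int_simplex2_eq_box:
  "0 \<le> l1 \<Longrightarrow> r1 \<le> l2 \<Longrightarrow> r2 \<le> 1 \<Longrightarrow>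
    box (l1, l2) (r1, r2) \<inter> simplex2 = box (l1, l2) (r1, r2)"
  by (auto simp: simplex2_def mem_box Basis_prod_def)

lemma box_Int_simplex2_empty:
  "r2 \<le> l1 \<Longrightarrow> box (l1, l2) (r1, r2) \<inter> simplex2 = {}"
  by (auto simp: simplex2_def mem_box Basis_prod_def)

lemma box_Int_simplex2_diag:
  "0 \<le> l \<Longrightarrow> r \<le> 1 \<Longrightarrow>
    box (l, l) (r, r) \<inter> simplex2 = {p. l < fst p \<and> fst p < snd p \<and> snd p < r}"
  by (auto simp: simplex2_def mem_box Basis_prod_def)

text \<open>Because \<open>pcat\<close> halves time at every step, the \<open>k\<close>-th of the \<open>n\<close> segments of \<open>pchain\<close>
  is traversed during \<open>[seg_start k, seg_end n k]\<close>.\<close>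

definition seg_start :: "nat \<Rightarrow> real" where
  "seg_start k = 1 - (1/2) ^ k"

definition seg_end :: "nat \<Rightarrow> nat \<Rightarrow> real" where
  "seg_end n k = (if Suc k = n then 1 else 1 - (1/2) ^ Suc k)"

lemma seg_start_Suc: "seg_start (Suc k) = (seg_start k + 1) / 2"
  by (simp add: seg_start_def field_simps)

lemma seg_end_Suc: "k < n \<Longrightarrow> seg_end (Suc n) (Suc k) = (seg_end n k + 1) / 2"
  by (simp add: seg_end_def field_simps)

lemma seg_start_less_seg_end: "k < n \<Longrightarrow> seg_start k < seg_end n k"
  by (auto simp: seg_start_def seg_end_def)

lemma seg_start_nonneg: "0 \<le> seg_start k"
  by (simp add: seg_start_def power_le_one)

lemma seg_end_le_1: "seg_end n k \<le> 1"
  by (simp add: seg_end_def)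

lemma seg_end_le_seg_start: "k < k' \<Longrightarrow> k' < n \<Longrightarrow> seg_end n k \<le> seg_start k'"
  using power_decreasing[of "Suc k" k' "1/2::real"] by (auto simp: seg_start_def seg_end_def)

lemma half_le_seg_start_Suc: "1/2 \<le> seg_start (Suc k)"
  using power_decreasing[of 1 "Suc k" "1/2::real"] by (simp add: seg_start_def)

lemma ramp_double_shift: "l < r \<Longrightarrow> ramp l r (2 * s - 1) = ramp ((l + 1) / 2) ((r + 1) / 2) s"
  by (auto simp: ramp_def field_simps)

lemma pchain_notin: "a \<notin> set js \<Longrightarrow> pchain js s a = 0"
  by (induction js arbitrary: s rule: pchain.induct) (auto simp: Epath_def unitv_def pcat_def)

lemma pchain_nth:
  "distinct js \<Longrightarrow> k < length js \<Longrightarrow> 0 \<le> s \<Longrightarrow> s \<le> 1 \<Longrightarrow>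
   pchain js s (js ! k) = ramp (seg_start k) (seg_end (length js) k) s"
proof (induction js arbitrary: k s rule: pchain.induct)
  case 1
  then show ?case by simp
next
  case (2 j)
  then show ?case by (auto simp: Epath_def unitv_def ramp_def seg_start_def seg_end_def)
next
  case (3 j j' js)
  let ?js = "j' # js"
  show ?case
  proof (cases k)
    case 0
    have "j \<notin> set ?js" using "3.prems"(1) by simp
    then show ?thesis
      using "3.prems" pchain_notin[of j ?js] 0
      by (auto simp: pcat_def Epath_def unitv_def ramp_def seg_start_def seg_end_def)
  next
    case (Suc k')
    have k': "k' < length ?js" using "3.prems"(2) Suc by simp
    have "?js ! k' \<noteq> j" using "3.prems"(1) k' by (metis distinct.simps(2) nth_mem)
    show ?thesis
    proof (cases "s < 1/2")
      case True
      then have "ramp (seg_start k) (seg_end (length (j # ?js)) k) s = 0"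
        using half_le_seg_start_Suc[of k'] unfolding Suc ramp_def by auto
      then show ?thesis using True \<open>?js ! k' \<noteq> j\<close> Suc by (simp add: pcat_def Epath_def unitv_def)
    next
      case False
      have "pchain ?js (2 * s - 1) (?js ! k') =
          ramp (seg_start k') (seg_end (length ?js) k') (2 * s - 1)"
        using "3.IH"[OF _ k'] "3.prems" False by simp
      also have "\<dots> = ramp (seg_start k) (seg_end (length (j # ?js)) k) s"
        using ramp_double_shift[OF seg_start_less_seg_end[OF k']] Suc k'
        by (simp add: seg_start_Suc seg_end_Suc)
      finally show ?thesis
        using False \<open>?js ! k' \<noteq> j\<close> Suc by (simp add: pcat_def Epath_def unitv_def)
    qed
  qed
qed

lemma sig2_pchain_nth:
  assumes "distinct js" and k: "k < length js" and k': "k' < length js"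
  shows "sig2 (pchain js) (js ! k) (js ! k') = (if k < k' then 1 else if k = k' then 1/2 else 0)"
proof -
  let ?l = seg_start and ?r = "seg_end (length js)"
  have ramp: "pchain js s (js ! i) = ramp (?l i) (?r i) s" if "i < length js" "0 < s" "s < 1" for i s
    using pchain_nth[OF assms(1) that(1)] that by simp
  have lr: "?l i < ?r i" if "i < length js" for i
    using seg_start_less_seg_end[OF that] .
  have "sig2 (pchain js) (js ! k) (js ! k') =
      integral (box (?l k, ?l k') (?r k, ?r k') \<inter> simplex2) (\<lambda>_. 1)
        / ((?r k - ?l k) * (?r k' - ?l k'))"
    unfolding sig2_def simplex2_def[symmetric]
    by (rule integral_simplex2_ramps[OF ramp[OF k] ramp[OF k'] seg_start_nonneg lr[OF k] seg_end_le_1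
          seg_start_nonneg lr[OF k'] seg_end_le_1])
  also have "\<dots> = (if k < k' then 1 else if k = k' then 1/2 else 0)"
  proof -
    consider "k < k'" | "k' < k" | "k = k'" by linarith
    then show ?thesis
    proof cases
      case 1
      then show ?thesis
        using lr[OF k] lr[OF k'] seg_end_le_seg_start[OF 1 k']
        by (simp add: box_Int_simplex2_eq_box seg_start_nonneg seg_end_le_1 integral_open_interval
            content_Pair)
    next
      case 2
      then show ?thesis
        by (simp add: box_Int_simplex2_empty seg_end_le_seg_start[OF 2 k])
    next
      case 3
      then show ?thesis
        using lr[OF k]
        by (simp add: box_Int_simplex2_diag seg_start_nonneg seg_end_le_1 integral_triangle
            power2_eq_square)
    qed
  qed
  finally show ?thesis .
qed

lemma sig2_pchain_notin: "a \<notin> set js \<or> b \<notin> set js \<Longrightarrow> sig2 (pchain js) a b = 0"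
  by (auto simp: sig2_def pchain_notin)

lemma sig2_pchain_upt:
  "sig2 (pchain [p..<q]) a b =
    (if p \<le> a \<and> a < q \<and> p \<le> b \<and> b < q
     then (if a < b then 1 else if a = b then 1/2 else 0) else 0)"
proof (cases "p \<le> a \<and> a < q \<and> p \<le> b \<and> b < q")
  case True
  then have "sig2 (pchain [p..<q]) ([p..<q] ! (a - p)) ([p..<q] ! (b - p)) =
      (if a - p < b - p then 1 else if a - p = b - p then 1/2 else 0)"
    by (intro sig2_pchain_nth) auto
  with True show ?thesis by auto
next
  case False
  then show ?thesis by (auto intro: sig2_pchain_notin)
qed

lemma pchain_upt_increment:
  "pchain [p..<q] 1 a - pchain [p..<q] 0 a = (if p \<le> a \<and> a < q then 1 else 0)"
proof (cases "p \<le> a \<and> a < q")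
  case True
  let ?k = "a - p"
  have nth: "[p..<q] ! ?k = a" and k: "?k < length [p..<q]" using True by auto
  have "pchain [p..<q] s a = ramp (seg_start ?k) (seg_end (length [p..<q]) ?k) s"
    if "0 \<le> s" "s \<le> 1" for s
    using pchain_nth[OF _ k that] unfolding nth by simp
  moreover have "0 \<le> seg_start ?k" "seg_start ?k < seg_end (length [p..<q]) ?k"
    "seg_end (length [p..<q]) ?k \<le> 1"
    using seg_start_nonneg seg_start_less_seg_end[OF k] seg_end_le_1 .
  ultimately show ?thesis
    using True by (simp add: ramp_def)
next
  case False
  then show ?thesis by (simp add: pchain_notin)
qed

section \<open>Blocks of a composition\<close>

definition in_block :: "nat list \<Rightarrow> nat \<Rightarrow> nat \<Rightarrow> bool" where
  "in_block \<alpha> i k \<longleftrightarrow> pref \<alpha> i \<le> k \<and> k < pref \<alpha> (Suc i)"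

lemma pref_Suc: "i < length \<alpha> \<Longrightarrow> pref \<alpha> (Suc i) = pref \<alpha> i + \<alpha> ! i"
  by (simp add: pref_def take_Suc_conv_app_nth)

lemma pref_mono: "i \<le> j \<Longrightarrow> pref \<alpha> i \<le> pref \<alpha> j"
  by (metis le_add_diff_inverse pref_def sum_list_append take_add le_add1)

lemma pref_le_sum_list: "pref \<alpha> i \<le> sum_list \<alpha>"
  by (metis pref_def append_take_drop_id sum_list_append le_add1)

lemma pref_eq_sum_list: "length \<alpha> \<le> i \<Longrightarrow> pref \<alpha> i = sum_list \<alpha>"
  by (simp add: pref_def)

lemma in_block_less_length: "in_block \<alpha> i k \<Longrightarrow> i < length \<alpha>"
  using pref_eq_sum_list[of \<alpha> i] pref_eq_sum_list[of \<alpha> "Suc i"] by (force simp: in_block_def)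

lemma in_block_less_sum_list: "in_block \<alpha> i k \<Longrightarrow> k < sum_list \<alpha>"
  using pref_le_sum_list[of \<alpha> "Suc i"] by (simp add: in_block_def)

lemma in_block_unique: "in_block \<alpha> i k \<Longrightarrow> in_block \<alpha> j k \<Longrightarrow> i = j"
  using pref_mono[of "Suc i" j \<alpha>] pref_mono[of "Suc j" i \<alpha>] by (force simp: in_block_def)

lemma ex_in_block:
  assumes "k < sum_list \<alpha>"
  shows "\<exists>i. in_block \<alpha> i k"
proof -
  have "k < pref \<alpha> n \<Longrightarrow> \<exists>i. in_block \<alpha> i k" for n
  proof (induction n)
    case 0
    then show ?case by (simp add: pref_def)
  next
    case (Suc n)
    then show ?case by (cases "k < pref \<alpha> n") (auto simp: in_block_def not_less)
  qed
  from this[of "length \<alpha>"] show ?thesis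
    using assms by (simp add: pref_eq_sum_list)
qed

lemma sum_in_block:
  "k < sum_list \<alpha> \<Longrightarrow> (\<Sum>i<length \<alpha>. of_bool (in_block \<alpha> i k)) = (1::real)"
proof -
  assume "k < sum_list \<alpha>"
  then obtain j where j: "in_block \<alpha> j k" using ex_in_block by blast
  then have "(\<Sum>i<length \<alpha>. of_bool (in_block \<alpha> i k)) =
      (\<Sum>i<length \<alpha>. if i = j then 1 else (0::real))"
    by (intro sum.cong) (auto dest: in_block_unique)
  then show ?thesis using in_block_less_length[OF j] by simp
qed

definition block_skew :: "nat list \<Rightarrow> nat \<Rightarrow> nat \<Rightarrow> nat \<Rightarrow> real" where
  "block_skew \<alpha> i k l =
     (if in_block \<alpha> i k \<and> in_block \<alpha> i l then sgn (real l - real k) / 2 else 0)"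

lemma sig_Ax: "sig (Ax \<alpha> i) = texp (0, \<lambda>k. of_bool (in_block \<alpha> i k), block_skew \<alpha> i)"
  by (auto simp: sig_def Ax_def texp_Pair pchain_upt_increment sig2_pchain_upt block_skew_def
      in_block_def fun_eq_iff)

lemma lie_gen_block:
  assumes "0 < sum_list \<alpha>"
  shows "(0, \<lambda>k. of_bool (in_block \<alpha> i k), block_skew \<alpha> i) \<in> lie_gen (sum_list \<alpha>)"
proof -
  have "sgn (real l - real k) + sgn (real k - real l) = 0" for k l
    by (simp add: sgn_if)
  then show ?thesis
    using assms
    by (auto simp: lie_gen_iff lie_coords_def block_skew_def add_divide_distrib[symmetric]
        dest: in_block_less_sum_list)
qed

lemma W_eq:
  assumes "0 < sum_list \<alpha>"
  shows "W \<alpha> k l = (\<Sum>i<length \<alpha>. block_skew \<alpha> i k l) / length \<alpha>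
    + (\<Sum>i<length \<alpha>. of_bool (in_block \<alpha> i k)) * (\<Sum>i<length \<alpha>. of_bool (in_block \<alpha> i l))
      / (2 * (length \<alpha>)\<^sup>2)"
proof -
  have "0 < length \<alpha>" using assms by (cases \<alpha>) auto
  have "map (\<lambda>i. sig (Ax \<alpha> i)) [0..<length \<alpha>] =
      map (\<lambda>i. texp (0, \<lambda>k. of_bool (in_block \<alpha> i k), block_skew \<alpha> i)) [0..<length \<alpha>]"
    by (simp add: sig_Ax)
  also have "bary (sum_list \<alpha>) \<dots> = texp (0, \<lambda>k. (\<Sum>i<length \<alpha>. of_bool (in_block \<alpha> i k)) / length \<alpha>,
      \<lambda>k l. (\<Sum>i<length \<alpha>. block_skew \<alpha> i k l) / length \<alpha>)"
    by (rule bary_texp[OF assms \<open>0 < length \<alpha>\<close>]) (simp add: lie_gen_block[OF assms])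
  finally show ?thesis
    unfolding W_def bary2_def by (simp add: texp_Pair power2_eq_square)
qed

lemma bdsum_in_block:
  assumes "in_block \<alpha> i a" and "in_block \<alpha> i b"
  shows "bdsum \<alpha> B a b = B i (a - pref \<alpha> i) (b - pref \<alpha> i)"
proof -
  have "(THE i. i < length \<alpha> \<and> pref \<alpha> i \<le> a \<and> a < pref \<alpha> (Suc i)) = i"
  proof (rule the_equality)
    show "i < length \<alpha> \<and> pref \<alpha> i \<le> a \<and> a < pref \<alpha> (Suc i)"
      using assms(1) in_block_less_length[OF assms(1)] by (simp add: in_block_def)
  next
    fix i' assume "i' < length \<alpha> \<and> pref \<alpha> i' \<le> a \<and> a < pref \<alpha> (Suc i')"
    then show "i' = i"
      using assms(1) by (intro in_block_unique[of \<alpha> i' a]) (simp_all add: in_block_def)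
  qed
  then show ?thesis
    using assms in_block_less_length[OF assms(1)] by (auto simp: bdsum_def in_block_def)
qed

lemma bdsum_not_in_block:
  "\<not> (\<exists>i. in_block \<alpha> i a \<and> in_block \<alpha> i b) \<Longrightarrow> bdsum \<alpha> B a b = 0"
  by (auto simp: bdsum_def in_block_def)

lemma bdsum_Umat_skew:
  "bdsum \<alpha> (\<lambda>i k l. Umat (\<alpha> ! i) k l - transp (Umat (\<alpha> ! i)) k l) a b
     = 2 * (\<Sum>i<length \<alpha>. block_skew \<alpha> i a b)"
proof (cases "\<exists>i. in_block \<alpha> i a \<and> in_block \<alpha> i b")
  case True
  then obtain j where a: "in_block \<alpha> j a" and b: "in_block \<alpha> j b" by blast
  have j: "j < length \<alpha>" using in_block_less_length[OF a] .
  have "(\<Sum>i<length \<alpha>. block_skew \<alpha> i a b) =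
      (\<Sum>i<length \<alpha>. if i = j then block_skew \<alpha> j a b else 0)"
    using a by (intro sum.cong) (auto simp: block_skew_def dest: in_block_unique)
  also have "\<dots> = sgn (real b - real a) / 2"
    using j a b by (simp add: block_skew_def)
  finally have "2 * (\<Sum>i<length \<alpha>. block_skew \<alpha> i a b) = sgn (real b - real a)"
    by simp
  moreover have "Umat (\<alpha> ! j) (a - pref \<alpha> j) (b - pref \<alpha> j)
      - Umat (\<alpha> ! j) (b - pref \<alpha> j) (a - pref \<alpha> j) = sgn (real b - real a)"
    using a b pref_Suc[OF j] by (auto simp: Umat_def in_block_def sgn_if)
  ultimately show ?thesis
    by (simp add: bdsum_in_block[OF a b] transp_def)
next
  case False
  then have "block_skew \<alpha> i a b = 0" for i by (auto simp: block_skew_def)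
  then show ?thesis using False by (simp add: bdsum_not_in_block)
qed

theorem lemma7p7:
  fixes m :: nat and \<alpha> :: "nat list"
  assumes "is_composition m \<alpha>"
  shows "\<forall>a<m. \<forall>b<m. W \<alpha> a b =
     1 / (2 * real (length \<alpha>)) *
       bdsum \<alpha> (\<lambda>i k l. Umat (\<alpha> ! i) k l - transp (Umat (\<alpha> ! i)) k l) a b
     + 1 / (2 * real (length \<alpha>) ^ 2)"
proof (intro allI impI)
  fix a b assume a: "a < m" and b: "b < m"
  have m: "sum_list \<alpha> = m" using assms by (simp add: is_composition_def)
  then have "0 < length \<alpha>" using a by (cases \<alpha>) auto
  have "W \<alpha> a b =
      (\<Sum>i<length \<alpha>. block_skew \<alpha> i a b) / length \<alpha> + 1 / (2 * (length \<alpha>)\<^sup>2)"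
    using W_eq[of \<alpha> a b] sum_in_block[of a \<alpha>] sum_in_block[of b \<alpha>] a b m by simp
  then show "W \<alpha> a b = 1 / (2 * real (length \<alpha>)) *
       bdsum \<alpha> (\<lambda>i k l. Umat (\<alpha> ! i) k l - transp (Umat (\<alpha> ! i)) k l) a b
     + 1 / (2 * real (length \<alpha>) ^ 2)"
    using \<open>0 < length \<alpha>\<close> by (simp add: bdsum_Umat_skew)
qed

end
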